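(* Let $m\ge1$, $0\le q\le n$, $p\ge0$ and $1\le k\le n-q$. For $1\le i\le m$ and $1\le j\le n$, $L_{i,2j-1+m}f_{k,p,q}=2k\left(\frac M2+p+q+k-1\right)f_{k-1,p+1,q+1}\,x_i\,\grave{x}_{2j-1}$, where $M=m-2n$.
   Context: On $\mathbb{R}^{m|2n}$ with even $x_1..x_m$ and odd $\grave{x}_1..\grave{x}_{2n}$: $r^2=\sum x_i^2$, $\theta^2=-\sum_{l=1}^n\grave{x}_{2l-1}\grave{x}_{2l}$. The operator is $L_{i,2j-1+m}=2x_i\partial_{\grave{x}_{2j}}-\grave{x}_{2j-1}\partial_{x_i}$. For $0\le k\le n-q$, $f_{k,p,q}=\sum_{s=0}^ka_sr^{2k-2s}\theta^{2s}$ with $a_s=\binom ks\frac{(n-q-s)!}{\Gamma(\frac m2+p+k-s)}\frac{\Gamma(\frac m2+p+k)}{(n-q-k)!}$. *)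

theory Defs
  imports "HOL-Analysis.Analysis" "HOL-Library.Function_Algebras"
begin

text \<open>A superfunction is represented by its coefficients with respect to the
  Grassmann monomials: F S x is the coefficient of the ordered monomial
  xgr_{s1} xgr_{s2} ... (s1 < s2 < ..., S = {s1,s2,...}) evaluated at the even point x.
  Even variables are x 1, ..., x m; odd variables have indices 1..2n.\<close>

type_synonym sfun = "nat set \<Rightarrow> (nat \<Rightarrow> real) \<Rightarrow> real"

text \<open>Sign of xgr_A * xgr_B = sgn * xgr_(A Un B) for disjoint A, B.\<close>
definition grsign :: "nat set \<Rightarrow> nat set \<Rightarrow> real" where
  "grsign A B = (-1) ^ card {(a, b). a \<in> A \<and> b \<in> B \<and> b < a}"

definition sf_mult :: "sfun \<Rightarrow> sfun \<Rightarrow> sfun" where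
  "sf_mult F G = (\<lambda>S x. \<Sum>A\<in>Pow S. grsign A (S - A) * F A x * G (S - A) x)"

definition sf_const :: "real \<Rightarrow> sfun" where
  "sf_const c = (\<lambda>S x. if S = {} then c else 0)"

definition sf_scale :: "real \<Rightarrow> sfun \<Rightarrow> sfun" where
  "sf_scale c F = (\<lambda>S x. c * F S x)"

primrec sf_pow :: "sfun \<Rightarrow> nat \<Rightarrow> sfun" where
  "sf_pow F 0 = sf_const 1"
| "sf_pow F (Suc k) = sf_mult F (sf_pow F k)"

definition even_var :: "nat \<Rightarrow> sfun" where
  "even_var i = (\<lambda>S x. if S = {} then x i else 0)"

definition odd_var :: "nat \<Rightarrow> sfun" where
  "odd_var j = (\<lambda>S x. if S = {j} then 1 else 0)"

definition sf_dx :: "nat \<Rightarrow> sfun \<Rightarrow> sfun" where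
  "sf_dx i F = (\<lambda>S x. deriv (\<lambda>t. F S (x(i := t))) (x i))"

text \<open>(Left) derivative with respect to the odd variable xgr_j:
  it maps xgr_S to (-1)^{#{s in S. s < j}} xgr_(S - {j}) if j in S, and to 0 otherwise.\<close>
definition sf_dodd :: "nat \<Rightarrow> sfun \<Rightarrow> sfun" where
  "sf_dodd j F = (\<lambda>S x. if j \<in> S then 0
                         else (-1) ^ card {s \<in> S. s < j} * F (insert j S) x)"

definition r2 :: "nat \<Rightarrow> sfun" where
  "r2 m = (\<Sum>i=1..m. sf_mult (even_var i) (even_var i))"

definition theta2 :: "nat \<Rightarrow> sfun" where
  "theta2 n = - (\<Sum>l=1..n. sf_mult (odd_var (2*l - 1)) (odd_var (2*l)))"

text \<open>L_{i,2j-1+m} = 2 x_i d/d xgr_{2j} - xgr_{2j-1} d/dx_i.\<close>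
definition Lop :: "nat \<Rightarrow> nat \<Rightarrow> sfun \<Rightarrow> sfun" where
  "Lop i j F = sf_mult (sf_scale 2 (even_var i)) (sf_dodd (2*j) F)
             - sf_mult (odd_var (2*j - 1)) (sf_dx i F)"

definition coef_a :: "nat \<Rightarrow> nat \<Rightarrow> nat \<Rightarrow> nat \<Rightarrow> nat \<Rightarrow> nat \<Rightarrow> real" where
  "coef_a m n k p q s =
     real (k choose s) * (fact (n - q - s) / Gamma (real m / 2 + real p + real k - real s))
       * (Gamma (real m / 2 + real p + real k) / fact (n - q - k))"

definition f_kpq :: "nat \<Rightarrow> nat \<Rightarrow> nat \<Rightarrow> nat \<Rightarrow> nat \<Rightarrow> sfun" where
  "f_kpq m n k p q = (\<Sum>s=0..k. sf_scale (coef_a m n k p q s)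
                         (sf_mult (sf_pow (r2 m) (k - s)) (sf_pow (theta2 n) s)))"

end

theory Submission
  imports Defs
begin
text \<open>
  Everything is computed coefficientwise in the Grassmann monomials xgr_S.
  (1) r^2 has no Grassmann part, so multiplying by a power of r^2, by x_i, or by a
  single odd variable has a simple closed form.  (2) theta^{2s} has coefficient
  (-1)^s s! at xgr_S if S is a union of s odd pairs {2l-1, 2l} (1 <= l <= n), else 0.
  (3) Hence d/d xgr_{2j} theta^{2s} = s theta^{2s-2} xgr_{2j-1}; all signs are +1
  because such unions have even size on each side of 2j-1.  (4) Consequently L maps
  sum_s c_s r^{2(k-s)} theta^{2s} to 2 kappa (sum_t c'_t r^{2(k-1-t)} theta^{2t}) x_i xgr_{2j-1}
  whenever (t+1) c_{t+1} - (k-t) c_t = kappa c'_t.  (5) The Gamma-coefficients a_s satisfy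
  this recurrence with kappa = k (M/2+p+q+k-1), and the theorem follows from (4) and (5).
\<close>

lemma sum_fun_apply: "(\<Sum>a\<in>A. f a) x = (\<Sum>a\<in>A. f a x)"
  by (induction A rule: infinite_finite_induct) auto

subsection \<open>Superfunctions without Grassmann part and odd variables\<close>

definition sf_body :: "((nat \<Rightarrow> real) \<Rightarrow> real) \<Rightarrow> sfun" where
  "sf_body g = (\<lambda>S x. if S = {} then g x else 0)"

lemma grsign_empty_left [simp]: "grsign {} B = 1"
  and grsign_empty_right [simp]: "grsign A {} = 1"
  by (simp_all add: grsign_def)

lemma sf_mult_body_left: "sf_mult (sf_body g) F = (\<lambda>S x. if finite S then g x * F S x else 0)"
proof (intro ext)
  fix S x
  show "sf_mult (sf_body g) F S x = (if finite S then g x * F S x else 0)"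
  proof (cases "finite S")
    case True
    have "sf_mult (sf_body g) F S x = (\<Sum>A\<in>Pow S. if A = {} then g x * F S x else 0)"
      unfolding sf_mult_def sf_body_def by (rule sum.cong) auto
    with True show ?thesis by (simp add: sum.delta)
  qed (simp add: sf_mult_def)
qed

lemma sf_mult_body_right: "sf_mult F (sf_body g) = (\<lambda>S x. if finite S then F S x * g x else 0)"
proof (intro ext)
  fix S x
  show "sf_mult F (sf_body g) S x = (if finite S then F S x * g x else 0)"
  proof (cases "finite S")
    case True
    have "sf_mult F (sf_body g) S x = (\<Sum>A\<in>Pow S. if A = S then F S x * g x else 0)"
      unfolding sf_mult_def sf_body_def by (rule sum.cong) auto
    with True show ?thesis by (simp add: sum.delta)
  qed (simp add: sf_mult_def)
qed

lemma sf_mult_body_body: "sf_mult (sf_body g) (sf_body h) = sf_body (\<lambda>x. g x * h x)"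
  by (simp add: sf_mult_body_left) (auto simp: sf_body_def fun_eq_iff)

lemma sf_pow_body: "sf_pow (sf_body g) a = sf_body (\<lambda>x. g x ^ a)"
proof (induction a)
  case 0
  show ?case by (simp add: sf_const_def sf_body_def fun_eq_iff)
next
  case (Suc a)
  then show ?case by (simp add: sf_mult_body_body)
qed

lemma sf_scale_body: "sf_scale c (sf_body g) = sf_body (\<lambda>x. c * g x)"
  by (simp add: sf_scale_def sf_body_def fun_eq_iff)

lemma sum_sf_body: "(\<Sum>i\<in>A. sf_body (g i)) = sf_body (\<lambda>x. \<Sum>i\<in>A. g i x)"
  by (auto simp: fun_eq_iff sum_fun_apply sf_body_def)

lemma grsign_singleton_left: "grsign {a} B = (-1) ^ card {b\<in>B. b < a}"
proof -
  have "{(a', b). a' \<in> {a} \<and> b \<in> B \<and> b < a'} = Pair a ` {b\<in>B. b < a}" by auto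
  moreover have "card (Pair a ` {b\<in>B. b < a}) = card {b\<in>B. b < a}"
    by (rule card_image) (auto simp: inj_on_def)
  ultimately show ?thesis unfolding grsign_def by simp
qed

lemma grsign_singleton_right: "grsign B {a} = (-1) ^ card {b\<in>B. a < b}"
proof -
  have "{(a', b). a' \<in> B \<and> b \<in> {a} \<and> b < a'} = (\<lambda>b. (b, a)) ` {b\<in>B. a < b}" by auto
  moreover have "card ((\<lambda>b. (b, a)) ` {b\<in>B. a < b}) = card {b\<in>B. a < b}"
    by (rule card_image) (auto simp: inj_on_def)
  ultimately show ?thesis unfolding grsign_def by simp
qed

lemma sf_mult_odd_left: "sf_mult (odd_var a) F =
   (\<lambda>S x. if finite S \<and> a \<in> S then (-1) ^ card {b\<in>S. b < a} * F (S - {a}) x else 0)"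
proof (intro ext)
  fix S x
  show "sf_mult (odd_var a) F S x =
    (if finite S \<and> a \<in> S then (-1) ^ card {b\<in>S. b < a} * F (S - {a}) x else 0)"
  proof (cases "finite S")
    case True
    have "sf_mult (odd_var a) F S x =
        (\<Sum>A\<in>Pow S. if A = {a} then grsign {a} (S - {a}) * F (S - {a}) x else 0)"
      unfolding sf_mult_def odd_var_def by (rule sum.cong) auto
    also have "\<dots> = (if a \<in> S then grsign {a} (S - {a}) * F (S - {a}) x else 0)"
      using True by (simp add: sum.delta)
    moreover have "{b\<in>S-{a}. b < a} = {b\<in>S. b < a}" by auto
    ultimately show ?thesis using True by (simp add: grsign_singleton_left)
  qed (simp add: sf_mult_def)
qed

lemma sf_mult_odd_right: "sf_mult F (odd_var a) =
   (\<lambda>S x. if finite S \<and> a \<in> S then (-1) ^ card {b\<in>S. a < b} * F (S - {a}) x else 0)"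
proof (intro ext)
  fix S x
  show "sf_mult F (odd_var a) S x =
    (if finite S \<and> a \<in> S then (-1) ^ card {b\<in>S. a < b} * F (S - {a}) x else 0)"
  proof (cases "finite S")
    case True
    have "sf_mult F (odd_var a) S x = (\<Sum>A\<in>Pow S. if A = S - {a} then
        (if a \<in> S then grsign (S - {a}) {a} * F (S - {a}) x else 0) else 0)"
      unfolding sf_mult_def odd_var_def by (rule sum.cong) auto
    also have "\<dots> = (if a \<in> S then grsign (S - {a}) {a} * F (S - {a}) x else 0)"
      using True by (simp add: sum.delta)
    moreover have "{b\<in>S-{a}. a < b} = {b\<in>S. a < b}" by auto
    ultimately show ?thesis using True by (simp add: grsign_singleton_right)
  qed (simp add: sf_mult_def)
qed

definition sqnorm :: "nat \<Rightarrow> (nat \<Rightarrow> real) \<Rightarrow> real" where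
  "sqnorm m x = (\<Sum>i=1..m. x i * x i)"

lemma even_var_body: "even_var i = sf_body (\<lambda>x. x i)"
  by (simp add: even_var_def sf_body_def)

lemma r2_body: "r2 m = sf_body (sqnorm m)"
  unfolding r2_def sqnorm_def even_var_body sf_mult_body_body sum_sf_body ..

subsection \<open>Powers of theta^2\<close>

text \<open>The odd pair {xgr_{2l-1}, xgr_{2l}} and the union of the odd pairs with index in T:
  y belongs to the pair with index (y+1) div 2.\<close>
definition odd_pair :: "nat \<Rightarrow> nat set" where
  "odd_pair l = {2*l - 1, 2*l}"

definition pair_union :: "nat set \<Rightarrow> nat set" where
  "pair_union T = {y. 0 < y \<and> (y + 1) div 2 \<in> T}"

text \<open>S is a union of s distinct odd pairs with indices in 1..n; exactly on these sets
  theta^{2s} has a nonzero coefficient, namely (-1)^s s!.\<close>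
definition theta_support :: "nat \<Rightarrow> nat \<Rightarrow> nat set \<Rightarrow> bool" where
  "theta_support n s S \<longleftrightarrow> (\<exists>T. T \<subseteq> {1..n} \<and> card T = s \<and> S = pair_union T)"

definition theta_coeff :: "nat \<Rightarrow> nat \<Rightarrow> nat set \<Rightarrow> real" where
  "theta_coeff n s S = (if theta_support n s S then (-1) ^ s * fact s else 0)"

lemma pair_index_iff: "0 < (y::nat) \<Longrightarrow> 1 \<le> l \<Longrightarrow> (y + 1) div 2 = l \<longleftrightarrow> y = 2*l - 1 \<or> y = 2*l"
  by presburger

lemma odd_mem_pair_union: "1 \<le> l \<Longrightarrow> 2*l - 1 \<in> pair_union T \<longleftrightarrow> l \<in> T"
  using pair_index_iff[of "2*l - 1" l] by (simp add: pair_union_def)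

lemma even_mem_pair_union: "1 \<le> l \<Longrightarrow> 2*l \<in> pair_union T \<longleftrightarrow> l \<in> T"
  by (simp add: pair_union_def)

lemma odd_pair_subset: "1 \<le> l \<Longrightarrow> odd_pair l \<subseteq> pair_union T \<longleftrightarrow> l \<in> T"
  using odd_mem_pair_union[of l T] even_mem_pair_union[of l T] by (auto simp: odd_pair_def)

lemma pair_union_minus: "1 \<le> l \<Longrightarrow> pair_union T - odd_pair l = pair_union (T - {l})"
  unfolding pair_union_def odd_pair_def using pair_index_iff by auto

lemma pair_union_insert: "1 \<le> l \<Longrightarrow> pair_union (insert l T) = odd_pair l \<union> pair_union T"
  unfolding pair_union_def odd_pair_def using pair_index_iff by auto

lemma pair_union_images:
  assumes "0 \<notin> T"
  shows "pair_union T = (\<lambda>l. 2*l - 1) ` T \<union> (\<lambda>l. 2*l) ` T"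
proof -
  have pos: "1 \<le> l" if "l \<in> T" for l using assms that by (cases l) auto
  have "y \<in> pair_union T \<longleftrightarrow> (\<exists>l\<in>T. y = 2*l - 1 \<or> y = 2*l)" for y
  proof
    assume "y \<in> pair_union T"
    then have "0 < y" "(y + 1) div 2 \<in> T" by (auto simp: pair_union_def)
    then show "\<exists>l\<in>T. y = 2*l - 1 \<or> y = 2*l" using pair_index_iff pos by blast
  next
    assume "\<exists>l\<in>T. y = 2*l - 1 \<or> y = 2*l"
    then obtain l where l: "l \<in> T" "y = 2*l - 1 \<or> y = 2*l" by blast
    moreover have "0 < y" using pos[OF l(1)] l(2) by auto
    ultimately show "y \<in> pair_union T" using pair_index_iff pos by (auto simp: pair_union_def)
  qed
  then show ?thesis by auto
qed

lemma card_pair_union: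
  assumes "finite T" "0 \<notin> T"
  shows "finite (pair_union T)" "card (pair_union T) = 2 * card T"
proof -
  have pos: "1 \<le> l" if "l \<in> T" for l using assms that by (cases l) auto
  have inj: "inj_on (\<lambda>l. 2*l - 1) T" "inj_on (\<lambda>l::nat. 2*l) T"
    using pos by (auto simp: inj_on_def)
  have "2*l - 1 \<noteq> 2*l'" if "1 \<le> l" for l l' :: nat using that by presburger
  then have disj: "(\<lambda>l. 2*l - 1) ` T \<inter> (\<lambda>l. 2*l) ` T = {}"
    using pos by blast
  show "finite (pair_union T)" using assms by (simp add: pair_union_images)
  show "card (pair_union T) = 2 * card T"
    unfolding pair_union_images[OF assms(2)]
    using assms(1) inj disj by (simp add: card_Un_disjoint card_image)
qed

lemma theta_support_finite: "theta_support n s S \<Longrightarrow> finite S"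
proof -
  assume "theta_support n s S"
  then obtain T where "T \<subseteq> {1..n}" "S = pair_union T" by (auto simp: theta_support_def)
  moreover have "0 \<notin> T" using \<open>T \<subseteq> {1..n}\<close> by auto
  ultimately show "finite S" using card_pair_union(1)[of T] finite_subset[of T "{1..n}"] by auto
qed

lemma theta_coeff_infinite: "\<not> finite S \<Longrightarrow> theta_coeff n s S = 0"
  using theta_support_finite by (auto simp: theta_coeff_def)

lemma theta_support_0: "theta_support n 0 S \<longleftrightarrow> S = {}"
proof
  assume "theta_support n 0 S"
  then obtain T where "T \<subseteq> {1..n}" "card T = 0" "S = pair_union T"
    by (auto simp: theta_support_def)
  then show "S = {}" using finite_subset[of T "{1..n}"] by (auto simp: pair_union_def)
qed (auto simp: theta_support_def pair_union_def intro: exI[of _ "{}"])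

lemma sf_mult_odd_pair:
  assumes l: "1 \<le> l"
  shows "sf_mult (odd_var (2*l - 1)) (odd_var (2*l)) = (\<lambda>S x. if S = odd_pair l then 1 else 0)"
proof (intro ext)
  fix S x
  have pair: "(2*l - 1 \<in> S \<and> S - {2*l - 1} = {2*l}) \<longleftrightarrow> S = odd_pair l"
    using l by (auto simp: odd_pair_def)
  show "sf_mult (odd_var (2*l - 1)) (odd_var (2*l)) S x = (if S = odd_pair l then 1 else 0)"
  proof (cases "S = odd_pair l")
    case True
    then have S: "finite S" "2*l - 1 \<in> S" "S - {2*l - 1} = {2*l}"
      using pair by (auto simp: odd_pair_def)
    have none_below: "{b\<in>S. b < 2*l - 1} = {}" using True by (auto simp: odd_pair_def)
    have "sf_mult (odd_var (2*l - 1)) (odd_var (2*l)) S x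
        = (-1) ^ card {b\<in>S. b < 2*l - 1} * odd_var (2*l) (S - {2*l - 1}) x"
      unfolding sf_mult_odd_left using S by simp
    also have "\<dots> = 1" unfolding none_below S(3) by (simp add: odd_var_def)
    finally show ?thesis using True by simp
  next
    case False
    then show ?thesis unfolding sf_mult_odd_left using pair by (auto simp: odd_var_def)
  qed
qed

lemma theta2_eq: "theta2 n = (\<lambda>S x. - (\<Sum>l=1..n. if S = odd_pair l then 1 else 0))"
proof -
  have "(\<Sum>l=1..n. sf_mult (odd_var (2*l - 1)) (odd_var (2*l)))
      = (\<Sum>l=1..n. (\<lambda>S x. if S = odd_pair l then 1 else 0))"
    using sf_mult_odd_pair by (intro sum.cong) auto
  then show ?thesis unfolding theta2_def by (simp add: fun_eq_iff sum_fun_apply)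
qed

text \<open>An odd pair commutes with every monomial avoiding its first element (an even
  number of transpositions).\<close>
lemma grsign_odd_pair:
  assumes l: "1 \<le> l" and B: "finite B" "2*l - 1 \<notin> B"
  shows "grsign (odd_pair l) B = 1"
proof -
  define X where "X = {b\<in>B. b < 2*l - 1}"
  have lt: "b < 2*l - 1" if "b \<in> B" "b < 2*l" for b
    using B l that by (cases "b = 2*l - 1") auto
  have "{(a, b). a \<in> odd_pair l \<and> b \<in> B \<and> b < a} = Pair (2*l - 1) ` X \<union> Pair (2*l) ` X"
    using l lt unfolding X_def odd_pair_def by auto
  moreover have "card (Pair (2*l - 1) ` X \<union> Pair (2*l) ` X) = card X + card X"
  proof -
    have "finite X" using B X_def by simp
    then have "card (Pair (2*l - 1) ` X \<union> Pair (2*l) ` X) = card (Pair (2*l - 1) ` X) + card (Pair (2*l) ` X)"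
      using l by (intro card_Un_disjoint) auto
    moreover have "card (Pair a ` X) = card X" for a by (rule card_image) (auto simp: inj_on_def)
    ultimately show ?thesis by metis
  qed
  ultimately show ?thesis unfolding grsign_def by (simp add: power_add)
qed

lemma sf_mult_theta2:
  assumes S: "finite S"
  shows "sf_mult (theta2 n) G S x = - (\<Sum>l=1..n. if odd_pair l \<subseteq> S then G (S - odd_pair l) x else 0)"
proof -
  have "sf_mult (theta2 n) G S x = (\<Sum>A\<in>Pow S. \<Sum>l=1..n.
      - (if A = odd_pair l then grsign A (S - A) * G (S - A) x else 0))"
    unfolding sf_mult_def theta2_eq
    by (rule sum.cong) (auto simp: sum_distrib_left sum_distrib_right sum_negf intro!: sum.cong)
  also have "\<dots> = - (\<Sum>l=1..n. \<Sum>A\<in>Pow S. if A = odd_pair l then grsign A (S - A) * G (S - A) x else 0)"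
    by (subst sum.swap) (simp add: sum_negf)
  also have "\<dots> = - (\<Sum>l=1..n. if odd_pair l \<subseteq> S then G (S - odd_pair l) x else 0)"
  proof -
    have "(\<Sum>A\<in>Pow S. if A = odd_pair l then grsign A (S - A) * G (S - A) x else 0)
        = (if odd_pair l \<subseteq> S then G (S - odd_pair l) x else 0)" if "l \<in> {1..n}" for l
    proof -
      have "grsign (odd_pair l) (S - odd_pair l) = 1"
        using that S by (intro grsign_odd_pair) (auto simp: odd_pair_def)
      then show ?thesis using S by (simp add: sum.delta)
    qed
    then show ?thesis by simp
  qed
  finally show ?thesis .
qed

text \<open>The recursion theta^{2(s+1)} = theta^2 theta^{2s} on the level of coefficients:
  a union of s+1 pairs arises from each of its s+1 pairs.\<close>
lemma theta_coeff_Suc: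
  assumes S: "finite S"
  shows "- (\<Sum>l=1..n. if odd_pair l \<subseteq> S then theta_coeff n s (S - odd_pair l) else 0)
    = theta_coeff n (Suc s) S"
proof (cases "theta_support n (Suc s) S")
  case True
  then obtain T where T: "T \<subseteq> {1..n}" "card T = Suc s" "S = pair_union T"
    by (auto simp: theta_support_def)
  have fT: "finite T" using T finite_subset by blast
  have "(\<Sum>l=1..n. if odd_pair l \<subseteq> S then theta_coeff n s (S - odd_pair l) else 0)
      = (\<Sum>l=1..n. if l \<in> T then (-1)^s * fact s else 0)"
  proof (rule sum.cong)
    fix l assume l: "l \<in> {1..n}"
    show "(if odd_pair l \<subseteq> S then theta_coeff n s (S - odd_pair l) else 0)
        = (if l \<in> T then (-1)^s * fact s else 0)"
    proof (cases "l \<in> T")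
      case True
      have "theta_support n s (S - odd_pair l)" unfolding theta_support_def
        using T True fT l by (intro exI[of _ "T - {l}"]) (auto simp: pair_union_minus)
      then show ?thesis using True T l by (simp add: odd_pair_subset theta_coeff_def)
    qed (use T l in \<open>simp add: odd_pair_subset\<close>)
  qed simp
  also have "\<dots> = real (card T) * ((-1)^s * fact s)"
    using T by (simp add: sum.If_cases Int_absorb1)
  finally show ?thesis using T True by (simp add: theta_coeff_def)
next
  case False
  have "(if odd_pair l \<subseteq> S then theta_coeff n s (S - odd_pair l) else 0) = 0"
    if l: "l \<in> {1..n}" for l
  proof (rule ccontr)
    assume "(if odd_pair l \<subseteq> S then theta_coeff n s (S - odd_pair l) else 0) \<noteq> 0"
    then have sub: "odd_pair l \<subseteq> S" and supp: "theta_support n s (S - odd_pair l)"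
      by (auto simp: theta_coeff_def split: if_splits)
    then obtain T where T: "T \<subseteq> {1..n}" "card T = s" "S - odd_pair l = pair_union T"
      by (auto simp: theta_support_def)
    have fT: "finite T" using T finite_subset by blast
    have lT: "l \<notin> T" using T(3) l even_mem_pair_union[of l T] by (auto simp: odd_pair_def)
    have "S = pair_union (insert l T)" using sub T(3) l by (auto simp: pair_union_insert)
    then have "theta_support n (Suc s) S" unfolding theta_support_def
      using T l lT fT by (intro exI[of _ "insert l T"]) auto
    with False show False by simp
  qed
  then show ?thesis using False by (simp add: theta_coeff_def)
qed

lemma sf_pow_theta2: "sf_pow (theta2 n) s = (\<lambda>S x. theta_coeff n s S)"
proof (induction s)
  case 0
  show ?case by (auto simp: fun_eq_iff sf_const_def theta_coeff_def theta_support_0)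
next
  case (Suc s)
  show ?case
  proof (intro ext)
    fix S x
    show "sf_pow (theta2 n) (Suc s) S x = theta_coeff n (Suc s) S"
    proof (cases "finite S")
      case True
      then show ?thesis using Suc theta_coeff_Suc[OF True, of n s] by (simp add: sf_mult_theta2)
    qed (auto simp: sf_mult_def theta_coeff_infinite)
  qed
qed


subsection \<open>The odd derivative of theta^{2s}\<close>

lemma pair_union_below: "1 \<le> j \<Longrightarrow> {y \<in> pair_union T. y < 2*j - 1} = pair_union {l\<in>T. l < j}"
proof -
  assume j: "1 \<le> j"
  have "0 < y \<Longrightarrow> y < 2*j - 1 \<longleftrightarrow> (y + 1) div 2 < j" for y using j by presburger
  then show ?thesis unfolding pair_union_def by blast
qed

lemma pair_union_above:
  "1 \<le> j \<Longrightarrow> j \<notin> T \<Longrightarrow> {y \<in> pair_union T. 2*j - 1 < y} = pair_union {l\<in>T. j < l}"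
proof -
  assume j: "1 \<le> j" "j \<notin> T"
  have "0 < y \<Longrightarrow> (y + 1) div 2 \<noteq> j \<Longrightarrow> 2*j - 1 < y \<longleftrightarrow> j < (y + 1) div 2" for y
    using j by presburger
  then show ?thesis unfolding pair_union_def using j(2) by blast
qed

text \<open>If S - {2j-1} is a union of pairs, then 2j is missing from S, and the
  Grassmann signs produced by xgr_{2j-1} on either side are +1, since on each side
  of 2j-1 there is an even number of indices.\<close>
lemma theta_support_remove_odd:
  assumes j: "1 \<le> j" and a: "2*j - 1 \<in> S" and supp: "theta_support n t (S - {2*j - 1})"
  shows "2*j \<notin> S" "even (card {y\<in>S. y < 2*j - 1})" "even (card {y\<in>S. 2*j - 1 < y})"
proof -
  obtain T where T: "T \<subseteq> {1..n}" "S - {2*j - 1} = pair_union T"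
    using supp by (auto simp: theta_support_def)
  have jT: "j \<notin> T" using T(2) odd_mem_pair_union[OF j, of T] by auto
  have "2*j \<noteq> 2*j - 1" using j by simp
  then show "2*j \<notin> S" using T(2) even_mem_pair_union[OF j, of T] jT by blast
  have fin: "finite T'" "0 \<notin> T'" if "T' \<subseteq> T" for T'
    using that T(1) finite_subset[of T' "{1..n}"] by auto
  have "{y\<in>S. y < 2*j - 1} = pair_union {l\<in>T. l < j}"
    using T(2) pair_union_below[OF j, of T] by auto
  then show "even (card {y\<in>S. y < 2*j - 1})" using card_pair_union(2) fin[of "{l\<in>T. l < j}"] by auto
  have "{y\<in>S. 2*j - 1 < y} = pair_union {l\<in>T. j < l}"
    using T(2) pair_union_above[OF j jT] by auto
  then show "even (card {y\<in>S. 2*j - 1 < y})" using card_pair_union(2) fin[of "{l\<in>T. j < l}"] by auto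
qed

text \<open>Coefficientwise form of  d/d xgr_{2j} theta^{2s} = s theta^{2s-2} xgr_{2j-1}.\<close>
lemma sf_dodd_theta_coeff:
  assumes j: "1 \<le> j" and jn: "j \<le> n" and b: "2*j \<notin> S"
  shows "(-1) ^ card {y\<in>S. y < 2*j} * theta_coeff n s (insert (2*j) S) =
    (if 2*j - 1 \<in> S then real s * theta_coeff n (s - 1) (S - {2*j - 1}) else 0)"
proof (cases "theta_support n s (insert (2*j) S)")
  case True
  then obtain T where T: "T \<subseteq> {1..n}" "card T = s" "insert (2*j) S = pair_union T"
    unfolding theta_support_def by blast
  have ne: "2*j \<noteq> 2*j - 1" using j by simp
  have jT: "j \<in> T" using T(3) even_mem_pair_union[OF j, of T] by blast
  then have aS: "2*j - 1 \<in> S" using T(3) ne odd_mem_pair_union[OF j, of T] by (metis insert_iff)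
  have "S - {2*j - 1} = insert (2*j) S - odd_pair j" using b ne unfolding odd_pair_def by blast
  then have Sm: "S - {2*j - 1} = pair_union (T - {j})" using T(3) pair_union_minus[OF j] by simp
  have fT: "finite T" using T(1) finite_subset by blast
  obtain s' where s': "s = Suc s'" using jT fT T(2) by (cases s) auto
  have supp: "theta_support n s' (S - {2*j - 1})" unfolding theta_support_def
    using Sm T(1,2) fT jT s' by (intro exI[of _ "T - {j}"]) auto
  have fS: "finite S" using theta_support_finite[OF True] by simp
  have "{y\<in>S. y < 2*j} = insert (2*j - 1) {y\<in>S. y < 2*j - 1}" using aS j by auto
  then have "card {y\<in>S. y < 2*j} = Suc (card {y\<in>S. y < 2*j - 1})" using fS by simp
  then have sign: "(-1::real) ^ card {y\<in>S. y < 2*j} = -1"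
    using theta_support_remove_odd(2)[OF j aS supp] by simp
  have lhs: "theta_coeff n s (insert (2*j) S) = (-1)^s * fact s"
    using True by (simp add: theta_coeff_def)
  have rhs: "theta_coeff n (s - 1) (S - {2*j - 1}) = (-1)^s' * fact s'"
    using supp s' by (simp add: theta_coeff_def)
  show ?thesis unfolding sign lhs rhs using aS s' by (simp add: fact_Suc)
next
  case False
  have "(if 2*j - 1 \<in> S then real s * theta_coeff n (s - 1) (S - {2*j - 1}) else 0) = 0"
  proof (rule ccontr)
    assume "\<not> ?thesis"
    then have aS: "2*j - 1 \<in> S" and s: "s \<noteq> 0" and supp: "theta_support n (s - 1) (S - {2*j - 1})"
      unfolding theta_coeff_def by (auto split: if_splits)
    obtain T where T: "T \<subseteq> {1..n}" "card T = s - 1" "S - {2*j - 1} = pair_union T"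
      using supp unfolding theta_support_def by blast
    have fT: "finite T" using T(1) finite_subset by blast
    have jT: "j \<notin> T" using T(3) odd_mem_pair_union[OF j, of T] by blast
    have "insert (2*j) S = odd_pair j \<union> (S - {2*j - 1})" using aS unfolding odd_pair_def by blast
    also have "\<dots> = pair_union (insert j T)" using T(3) pair_union_insert[OF j, of T] by simp
    finally have "theta_support n s (insert (2*j) S)" unfolding theta_support_def
      using T(1,2) fT jT j jn s by (intro exI[of _ "insert j T"]) auto
    with False show False by simp
  qed
  then show ?thesis using False by (simp add: theta_coeff_def)
qed

subsection \<open>The operator L on sums of the form sum_s c_s r^{2(k-s)} theta^{2s}\<close>

text \<open>The superfunction sum_{s=0}^k c_s r^{2(k-s)} theta^{2s}, written coefficientwise.\<close>
definition radial_theta_sum :: "nat \<Rightarrow> nat \<Rightarrow> (nat \<Rightarrow> real) \<Rightarrow> nat \<Rightarrow> sfun" where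
  "radial_theta_sum m n c k = (\<lambda>S x. \<Sum>s=0..k. c s * (sqnorm m x ^ (k - s) * theta_coeff n s S))"

lemma f_kpq_radial_theta_sum: "f_kpq m n k p q = radial_theta_sum m n (coef_a m n k p q) k"
proof (intro ext)
  fix S x
  show "f_kpq m n k p q S x = radial_theta_sum m n (coef_a m n k p q) k S x"
    unfolding f_kpq_def radial_theta_sum_def r2_body sf_pow_body sf_pow_theta2
      sf_mult_body_left sf_scale_def
    by (cases "finite S") (simp_all add: sum_fun_apply theta_coeff_infinite)
qed

lemma sf_dodd_radial_theta_sum:
  assumes j: "1 \<le> j" "j \<le> n"
  shows "sf_dodd (2*j) (radial_theta_sum m n c k) = (\<lambda>S x. if 2*j \<in> S then 0 else
     \<Sum>s=0..k. c s * (sqnorm m x ^ (k - s) *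
       (if 2*j - 1 \<in> S then real s * theta_coeff n (s - 1) (S - {2*j - 1}) else 0)))"
proof (intro ext)
  fix S x
  show "sf_dodd (2*j) (radial_theta_sum m n c k) S x = (if 2*j \<in> S then 0 else
     \<Sum>s=0..k. c s * (sqnorm m x ^ (k - s) *
       (if 2*j - 1 \<in> S then real s * theta_coeff n (s - 1) (S - {2*j - 1}) else 0)))"
  proof (cases "2*j \<in> S")
    case False
    then show ?thesis
      unfolding sf_dodd_def radial_theta_sum_def
      using sf_dodd_theta_coeff[OF j False] by (simp add: sum_distrib_left mult_ac)
  qed (simp add: sf_dodd_def)
qed

lemma sqnorm_update:
  assumes "i \<in> {1..m}"
  shows "sqnorm m (x(i := t)) = (sqnorm m x - x i * x i) + t * t"
proof -
  have split: "sqnorm m y = y i * y i + (\<Sum>l\<in>{1..m}-{i}. y l * y l)" for y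
    unfolding sqnorm_def using assms by (simp add: sum.remove)
  have "(\<Sum>l\<in>{1..m}-{i}. (x(i := t)) l * (x(i := t)) l) = (\<Sum>l\<in>{1..m}-{i}. x l * x l)"
    by (rule sum.cong) auto
  then have "sqnorm m (x(i := t)) = t * t + (\<Sum>l\<in>{1..m}-{i}. x l * x l)"
    using split[of "x(i := t)"] by simp
  moreover have "sqnorm m x = x i * x i + (\<Sum>l\<in>{1..m}-{i}. x l * x l)" by (rule split)
  ultimately show ?thesis by simp
qed

lemma sf_dx_radial_theta_sum:
  assumes "1 \<le> i" "i \<le> m"
  shows "sf_dx i (radial_theta_sum m n c k) = (\<lambda>S x. \<Sum>s=0..k.
    c s * (real (k - s) * sqnorm m x ^ (k - s - 1) * (2 * x i) * theta_coeff n s S))"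
proof (intro ext)
  fix S x
  define C where "C = sqnorm m x - x i * x i"
  have restrict: "(\<lambda>t. radial_theta_sum m n c k S (x(i := t)))
      = (\<lambda>t. \<Sum>s=0..k. c s * ((C + t*t) ^ (k - s) * theta_coeff n s S))"
    unfolding radial_theta_sum_def C_def using sqnorm_update[of i m x] assms by simp
  have deriv: "((\<lambda>t. \<Sum>s=0..k. c s * ((C + t*t) ^ (k - s) * theta_coeff n s S)) has_real_derivative
      (\<Sum>s=0..k. c s * (real (k - s) * (C + x i * x i) ^ (k - s - 1) * (2 * x i) * theta_coeff n s S)))
      (at (x i))"
    by (rule DERIV_sum) (auto intro!: derivative_eq_intros simp: algebra_simps)
  have "C + x i * x i = sqnorm m x" by (simp add: C_def)
  then show "sf_dx i (radial_theta_sum m n c k) S x = (\<Sum>s=0..k.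
      c s * (real (k - s) * sqnorm m x ^ (k - s - 1) * (2 * x i) * theta_coeff n s S))"
    unfolding sf_dx_def restrict using DERIV_imp_deriv[OF deriv] by simp
qed

text \<open>The scalar identity behind the lemma: after an index shift, the two parts of L
  combine termwise through the coefficient recurrence.\<close>
lemma shifted_sum_difference:
  fixes c c' th :: "nat \<Rightarrow> real"
  assumes k: "k = Suc k0"
    and rec: "\<And>t. t < k \<Longrightarrow> c (Suc t) * real (Suc t) - c t * real (k - t) = \<kappa> * c' t"
  shows "2 * X * (\<Sum>s=0..k. c s * (R ^ (k - s) * (real s * th (s - 1))))
     - (\<Sum>s=0..k. c s * (real (k - s) * R ^ (k - s - 1) * (2 * X) * th s))
     = (2 * \<kappa>) * (\<Sum>t=0..k-1. c' t * (R ^ (k - 1 - t) * th t)) * X"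
proof -
  have shift1: "(\<Sum>s=0..k. c s * (R ^ (k - s) * (real s * th (s - 1))))
      = (\<Sum>t=0..k0. c (Suc t) * (R ^ (k0 - t) * (real (Suc t) * th t)))"
    unfolding k by (subst sum.atLeast0_atMost_Suc_shift) simp
  have shift2: "(\<Sum>s=0..k. c s * (real (k - s) * R ^ (k - s - 1) * (2 * X) * th s))
      = (\<Sum>t=0..k0. c t * (real (k - t) * R ^ (k0 - t) * (2 * X) * th t))"
    unfolding k by (subst sum.atLeast0_atMost_Suc) simp
  have "2 * X * (\<Sum>t=0..k0. c (Suc t) * (R ^ (k0 - t) * (real (Suc t) * th t)))
      - (\<Sum>t=0..k0. c t * (real (k - t) * R ^ (k0 - t) * (2 * X) * th t))
      = (\<Sum>t=0..k0. 2 * X * R ^ (k0 - t) * th t * (c (Suc t) * real (Suc t) - c t * real (k - t)))"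
    by (simp add: sum_distrib_left sum_subtractf[symmetric] algebra_simps)
  also have "\<dots> = (\<Sum>t=0..k0. 2 * X * R ^ (k0 - t) * th t * (\<kappa> * c' t))"
    using rec k by (intro sum.cong) auto
  also have "\<dots> = (2 * \<kappa>) * (\<Sum>t=0..k-1. c' t * (R ^ (k - 1 - t) * th t)) * X"
    by (simp add: k sum_distrib_left sum_distrib_right algebra_simps)
  finally show ?thesis using shift1 shift2 by simp
qed

lemma Lop_radial_theta_sum:
  assumes i: "1 \<le> i" "i \<le> m" and j: "1 \<le> j" "j \<le> n" and k: "k = Suc k0"
    and rec: "\<And>t. t < k \<Longrightarrow> c (Suc t) * real (Suc t) - c t * real (k - t) = \<kappa> * c' t"
  shows "Lop i j (radial_theta_sum m n c k) =
    sf_mult (sf_mult (sf_scale (2 * \<kappa>) (radial_theta_sum m n c' (k - 1))) (even_var i))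
      (odd_var (2*j - 1))"
proof (intro ext)
  fix S x
  let ?a = "2*j - 1" and ?R = "sqnorm m x" and ?th = "\<lambda>t. theta_coeff n t (S - {2*j - 1})"
  have lhs: "Lop i j (radial_theta_sum m n c k) S x =
      (if finite S then 2 * x i * (if 2*j \<in> S then 0 else
         \<Sum>s=0..k. c s * (?R ^ (k - s) * (if ?a \<in> S then real s * ?th (s - 1) else 0))) else 0)
    - (if finite S \<and> ?a \<in> S then (-1) ^ card {y\<in>S. y < ?a} *
         (\<Sum>s=0..k. c s * (real (k - s) * ?R ^ (k - s - 1) * (2 * x i) * ?th s)) else 0)"
    unfolding Lop_def sf_dodd_radial_theta_sum[OF j] sf_dx_radial_theta_sum[OF i]
      even_var_body sf_scale_body sf_mult_body_left sf_mult_odd_left fun_diff_def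
    by simp
  have rhs: "sf_mult (sf_mult (sf_scale (2 * \<kappa>) (radial_theta_sum m n c' (k - 1))) (even_var i))
      (odd_var ?a) S x = (if finite S \<and> ?a \<in> S then (-1) ^ card {y\<in>S. ?a < y} *
         (2 * \<kappa> * (\<Sum>t=0..k-1. c' t * (?R ^ (k - 1 - t) * ?th t)) * x i) else 0)"
    unfolding even_var_body sf_mult_body_right sf_mult_odd_right sf_scale_def radial_theta_sum_def
    by simp
  show "Lop i j (radial_theta_sum m n c k) S x = sf_mult (sf_mult (sf_scale (2 * \<kappa>)
      (radial_theta_sum m n c' (k - 1))) (even_var i)) (odd_var ?a) S x"
  \<comment> \<open>Either S - {2j-1} is a union of pairs (then all signs are +1 and the sums
      combine by the recurrence), or every coefficient involved vanishes.\<close>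
  proof (cases "finite S \<and> ?a \<in> S \<and> (\<exists>t. theta_support n t (S - {?a}))")
    case True
    then obtain t where S: "finite S" "?a \<in> S" and supp: "theta_support n t (S - {?a})" by blast
    note parity = theta_support_remove_odd[OF j(1) S(2) supp]
    have "(-1::real) ^ card {y\<in>S. y < ?a} = 1" "(-1::real) ^ card {y\<in>S. ?a < y} = 1"
      using parity(2,3) by simp_all
    then show ?thesis
      unfolding lhs rhs using S parity(1) shifted_sum_difference[OF k rec] by simp
  next
    case False
    then consider (outside) "\<not> (finite S \<and> ?a \<in> S)"
      | (vanishing) "finite S \<and> ?a \<in> S" "\<And>t. ?th t = 0"
      by (auto simp: theta_coeff_def)
    then show ?thesis
    proof cases
      case outside
      then show ?thesis unfolding lhs rhs by auto
    next
      case vanishing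
      then show ?thesis unfolding lhs rhs vanishing(2) by simp
    qed
  qed
qed

subsection \<open>The recurrence for the coefficients a_s\<close>

text \<open>With Gamma(b+1) = b Gamma(b), the two Gamma-quotients occurring in
  (t+1) a_{t+1} - (k-t) a_t combine into a single one.\<close>
lemma fact_Gamma_difference:
  fixes \<alpha> :: real
  assumes pos: "\<alpha> - real t - 1 > 0" and t: "t < N"
  shows "fact (N - Suc t) / Gamma (\<alpha> - real t - 1) - fact (N - t) / Gamma (\<alpha> - real t)
    = (\<alpha> - 1 - real N) * (fact (N - Suc t) / Gamma (\<alpha> - real t))"
proof -
  have "\<alpha> - real t - 1 \<notin> \<int>\<^sub>\<le>\<^sub>0" using pos by auto
  then have Gamma_step: "Gamma (\<alpha> - real t) = (\<alpha> - real t - 1) * Gamma (\<alpha> - real t - 1)"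
    using Gamma_plus1[of "\<alpha> - real t - 1"] by simp
  have "N - t = Suc (N - Suc t)" using t by simp
  then have fact_step: "fact (N - t) = (real N - real t) * fact (N - Suc t)"
    using t by (simp add: of_nat_diff)
  define d where "d = \<alpha> - real t - 1"
  define g where "g = Gamma d"
  have "g > 0" unfolding g_def using pos by (intro Gamma_real_pos) (simp add: d_def)
  then have nonzero: "d \<noteq> 0" "g \<noteq> 0" using pos by (simp_all add: d_def)
  have "f / g - (real N - real t) * f / (d * g) = (d - (real N - real t)) * (f / (d * g))"
    for f :: real using nonzero by (simp add: field_simps)
  moreover have "d - (real N - real t) = \<alpha> - 1 - real N" by (simp add: d_def)
  ultimately show ?thesis unfolding Gamma_step fact_step d_def[symmetric] g_def[symmetric] by simp
qed

lemma coef_a_recurrence: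
  assumes m: "1 \<le> m" and k: "k \<le> n - q" and t: "t < k"
  shows "coef_a m n k p q (Suc t) * real (Suc t) - coef_a m n k p q t * real (k - t) =
    real k * ((real m - 2 * real n) / 2 + real p + real q + real k - 1)
      * coef_a m n (k - 1) (p + 1) (q + 1) t"
proof -
  define N where "N = n - q"
  define \<alpha> where "\<alpha> = real m / 2 + real p + real k"
  define G where "G = Gamma \<alpha> / fact (N - k)"
  define C where "C = real ((k - 1) choose t)"
  have binom_Suc: "real (k choose Suc t) * real (Suc t) = real k * C"
    using Suc_times_binomial_eq[of "k - 1" t] t unfolding C_def
    by (metis Suc_diff_1 gr_implies_not0 not_gr0 of_nat_mult)
  have binom: "real (k choose t) * real (k - t) = real k * C"
    using binomial_absorb_comp[of k t] by (simp add: C_def mult.commute flip: of_nat_mult)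
  have a_Suc: "coef_a m n k p q (Suc t) = real (k choose Suc t) * (fact (N - Suc t) / Gamma (\<alpha> - real t - 1)) * G"
    unfolding coef_a_def G_def \<alpha>_def N_def by (simp add: algebra_simps)
  have a: "coef_a m n k p q t = real (k choose t) * (fact (N - t) / Gamma (\<alpha> - real t)) * G"
    unfolding coef_a_def G_def \<alpha>_def N_def by simp
  have a': "coef_a m n (k - 1) (p + 1) (q + 1) t = C * (fact (N - Suc t) / Gamma (\<alpha> - real t)) * G"
  proof -
    have "real m / 2 + real (p + 1) + real (k - 1) = \<alpha>" using t by (simp add: \<alpha>_def)
    moreover have "n - (q + 1) - t = N - Suc t" "n - (q + 1) - (k - 1) = N - k"
      using t k unfolding N_def by auto
    ultimately show ?thesis unfolding coef_a_def C_def G_def by simp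
  qed
  have "coef_a m n k p q (Suc t) * real (Suc t) - coef_a m n k p q t * real (k - t)
      = (real (k choose Suc t) * real (Suc t)) * (fact (N - Suc t) / Gamma (\<alpha> - real t - 1)) * G
        - (real (k choose t) * real (k - t)) * (fact (N - t) / Gamma (\<alpha> - real t)) * G"
    unfolding a_Suc a by (simp only: mult_ac)
  also have "\<dots> = real k * C * G * (fact (N - Suc t) / Gamma (\<alpha> - real t - 1)
        - fact (N - t) / Gamma (\<alpha> - real t))"
    unfolding binom_Suc binom by (simp add: algebra_simps)
  also have "\<dots> = real k * (\<alpha> - 1 - real N) * coef_a m n (k - 1) (p + 1) (q + 1) t"
  proof -
    have "\<alpha> - real t - 1 > 0" using m t unfolding \<alpha>_def by linarith
    moreover have "t < N" using t k unfolding N_def by simp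
    ultimately have "fact (N - Suc t) / Gamma (\<alpha> - real t - 1) - fact (N - t) / Gamma (\<alpha> - real t)
        = (\<alpha> - 1 - real N) * (fact (N - Suc t) / Gamma (\<alpha> - real t))"
      by (rule fact_Gamma_difference)
    then show ?thesis unfolding a' by simp
  qed
  also have "\<alpha> - 1 - real N = (real m - 2 * real n) / 2 + real p + real q + real k - 1"
    using k t unfolding \<alpha>_def N_def by (simp add: of_nat_diff)
  finally show ?thesis .
qed

theorem lemma6p2:
  fixes m n p q k i j :: nat
  assumes "m \<ge> 1" and "q \<le> n" and "1 \<le> k" and "k \<le> n - q"
    and "1 \<le> i" and "i \<le> m" and "1 \<le> j" and "j \<le> n"
  shows "Lop i j (f_kpq m n k p q) =
    sf_mult (sf_mult
      (sf_scale (2 * real k * ((real m - 2 * real n) / 2 + real p + real q + real k - 1))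
         (f_kpq m n (k - 1) (p + 1) (q + 1)))
      (even_var i)) (odd_var (2 * j - 1))"
proof -
  define \<kappa> where "\<kappa> = real k * ((real m - 2 * real n) / 2 + real p + real q + real k - 1)"
  obtain k0 where k0: "k = Suc k0" using \<open>1 \<le> k\<close> by (cases k) auto
  have recurrence: "coef_a m n k p q (Suc t) * real (Suc t) - coef_a m n k p q t * real (k - t)
      = \<kappa> * coef_a m n (k - 1) (p + 1) (q + 1) t" if "t < k" for t
    unfolding \<kappa>_def using coef_a_recurrence[OF \<open>m \<ge> 1\<close> \<open>k \<le> n - q\<close> that] .
  have "Lop i j (f_kpq m n k p q) = sf_mult (sf_mult
      (sf_scale (2 * \<kappa>) (f_kpq m n (k - 1) (p + 1) (q + 1))) (even_var i)) (odd_var (2 * j - 1))"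
    unfolding f_kpq_radial_theta_sum
    using assms(5-8) k0 recurrence by (rule Lop_radial_theta_sum)
  then show ?thesis by (simp add: \<kappa>_def mult.assoc)
qed

end
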